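(* Let $\phi$ be an LTL formula in negation normal form that is in neXt Normal Form. If $A$ is a satisfying assignment of $\phi^p$, then there is a propositional assignment $A'$ for $\phi$ with $\phi\in A'$ such that $A'\cap\mathrm{atoms}(\phi)\subseteq A$. Conversely, if $A'$ is a propositional assignment for $\phi$ with $\phi\in A'$, then there is a satisfying assignment $A$ of $\phi^p$ such that $A'\cap\mathrm{atoms}(\phi)\subseteq A$.
   Context: $AP$ is a finite set of atoms, $L=\{a,\neg a: a\in AP\}$. LTL formulas in NNF: $\phi::= \mathit{tt}\mid \mathit{ff}\mid \ell \mid \phi\wedge\phi\mid\phi\vee\phi\mid \phi U\phi\mid \phi R\phi\mid X\phi$, $\ell\in L$. Propositional atoms: $\mathrm{atoms}(\phi)=\{\phi\}$ if $\phi$ is an atom, Next, Until or Release formula; $\mathrm{atoms}(\neg\psi)=\mathrm{atoms}(\psi)$; $\mathrm{atoms}(\phi_1\wedge\phi_2)=\mathrm{atoms}(\phi_1\vee\phi_2)=\mathrm{atoms}(\phi_1)\cup\mathrm{atoms}(\phi_2)$. $\phi$ is in XNF if $\mathrm{atoms}(\phi)$ contains no Until or Release formula. $\phi^p$ denotes $\phi$ viewed as a propositional formula whose propositional variables are the elements of $\mathrm{atoms}(\phi)$; a satisfying assignment $A$ of $\phi^p$ is identified with the set of variables in $\mathrm{atoms}(\phi)$ it makes true. The closure $cl(\phi)$ is the smallest set containing $\phi$, closed under immediate subformulas (operands of $\wedge,\vee,U,R,X,\neg$), and containing $X\psi$ for every Until or Release formula $\psi$ in it. A propositional assignment for $\phi$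 is a set $A'\subseteq cl(\phi)\cup L$ such that: for each $a\in AP$ exactly one of $a,\neg a$ is in $A'$; $(\theta_1\wedge\theta_2)\in A'\Rightarrow\theta_1,\theta_2\in A'$; $(\theta_1\vee\theta_2)\in A'\Rightarrow\theta_1\in A'$ or $\theta_2\in A'$; $(\theta_1U\theta_2)\in A'\Rightarrow\theta_2\in A'$ or both $\theta_1\in A'$ and $X(\theta_1U\theta_2)\in A'$; $(\theta_1R\theta_2)\in A'\Rightarrow\theta_2\in A'$ and ($\theta_1\in A'$ or $X(\theta_1R\theta_2)\in A'$).
   Formalization: A propositional assignment for $\phi$ has one further defining clause: ff is never an element of $A'$. The statement above fails without it. *)

theory Defs
  imports Main
begin

text \<open>LTL formulas in negation normal form over atomic propositions of the
  finite type 'a (playing the role of AP).  Pos a is the literal a, Neg a is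
  the literal not a.\<close>

datatype 'a ltl =
    TT
  | FF
  | Pos 'a
  | Neg 'a
  | And "'a ltl" "'a ltl"
  | Or "'a ltl" "'a ltl"
  | Until "'a ltl" "'a ltl"
  | Release "'a ltl" "'a ltl"
  | Next "'a ltl"

definition lits :: "'a ltl set" where
  "lits = {Pos a | a. True} \<union> {Neg a | a. True}"

fun atoms :: "'a ltl \<Rightarrow> 'a ltl set" where
  "atoms TT = {}"
| "atoms FF = {}"
| "atoms (Pos a) = {Pos a}"
| "atoms (Neg a) = {Pos a}"
| "atoms (And f g) = atoms f \<union> atoms g"
| "atoms (Or f g) = atoms f \<union> atoms g"
| "atoms (Until f g) = {Until f g}"
| "atoms (Release f g) = {Release f g}"
| "atoms (Next f) = {Next f}"

definition is_until_or_release :: "'a ltl \<Rightarrow> bool" where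
  "is_until_or_release f \<longleftrightarrow> (\<exists>g h. f = Until g h \<or> f = Release g h)"

definition xnf :: "'a ltl \<Rightarrow> bool" where
  "xnf f \<longleftrightarrow> (\<forall>g\<in>atoms f. \<not> is_until_or_release g)"

text \<open>Truth of the propositional formula f^p under the assignment A
  (the set of propositional variables, i.e. elements of atoms f, made true).\<close>
fun prop_sat :: "'a ltl set \<Rightarrow> 'a ltl \<Rightarrow> bool" where
  "prop_sat A TT = True"
| "prop_sat A FF = False"
| "prop_sat A (Pos a) = (Pos a \<in> A)"
| "prop_sat A (Neg a) = (Pos a \<notin> A)"
| "prop_sat A (And f g) = (prop_sat A f \<and> prop_sat A g)"
| "prop_sat A (Or f g) = (prop_sat A f \<or> prop_sat A g)"
| "prop_sat A (Until f g) = (Until f g \<in> A)"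
| "prop_sat A (Release f g) = (Release f g \<in> A)"
| "prop_sat A (Next f) = (Next f \<in> A)"

definition sat_assignment :: "'a ltl \<Rightarrow> 'a ltl set \<Rightarrow> bool" where
  "sat_assignment f A \<longleftrightarrow> A \<subseteq> atoms f \<and> prop_sat A f"

inductive_set cl :: "'a ltl \<Rightarrow> 'a ltl set" for f :: "'a ltl" where
  self: "f \<in> cl f"
| and1: "And g h \<in> cl f \<Longrightarrow> g \<in> cl f"
| and2: "And g h \<in> cl f \<Longrightarrow> h \<in> cl f"
| or1: "Or g h \<in> cl f \<Longrightarrow> g \<in> cl f"
| or2: "Or g h \<in> cl f \<Longrightarrow> h \<in> cl f"
| until1: "Until g h \<in> cl f \<Longrightarrow> g \<in> cl f"
| until2: "Until g h \<in> cl f \<Longrightarrow> h \<in> cl f"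
| release1: "Release g h \<in> cl f \<Longrightarrow> g \<in> cl f"
| release2: "Release g h \<in> cl f \<Longrightarrow> h \<in> cl f"
| next1: "Next g \<in> cl f \<Longrightarrow> g \<in> cl f"
| untilX: "Until g h \<in> cl f \<Longrightarrow> Next (Until g h) \<in> cl f"
| releaseX: "Release g h \<in> cl f \<Longrightarrow> Next (Release g h) \<in> cl f"

text \<open>Propositional assignment for f.  Besides the conditions listed in the
  paper we require FF \<notin> A'.\<close>
definition prop_assignment :: "'a ltl \<Rightarrow> 'a ltl set \<Rightarrow> bool" where
  "prop_assignment f A' \<longleftrightarrow>
     A' \<subseteq> cl f \<union> lits \<and>
     FF \<notin> A' \<and>
     (\<forall>a. (Pos a \<in> A') \<noteq> (Neg a \<in> A')) \<and>
     (\<forall>g h. And g h \<in> A' \<longrightarrow> g \<in> A' \<and> h \<in> A') \<and>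
     (\<forall>g h. Or g h \<in> A' \<longrightarrow> g \<in> A' \<or> h \<in> A') \<and>
     (\<forall>g h. Until g h \<in> A' \<longrightarrow> h \<in> A' \<or> (g \<in> A' \<and> Next (Until g h) \<in> A')) \<and>
     (\<forall>g h. Release g h \<in> A' \<longrightarrow> h \<in> A' \<and> (g \<in> A' \<or> Next (Release g h) \<in> A'))"

end

theory Submission
  imports Defs
begin

text \<open>Given a satisfying assignment A of \<open>\<phi>\<^sup>p\<close>, collect the formulas of
  \<open>cl \<phi>\<close> and the literals that are true when read propositionally under A.
  The Boolean closure conditions then hold by the truth tables of conjunction
  and disjunction, and the temporal ones hold vacuously: by XNF, A contains no
  Until or Release formula, so no such formula is true under A.
  Conversely, every member of a propositional assignment A' is propositionally
  true under A', and the truth of \<open>\<phi>\<^sup>p\<close> only depends on A' restricted to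
  the atoms of \<open>\<phi>\<close>.\<close>

lemma prop_sat_Int_atoms:
  "atoms \<psi> \<subseteq> B \<Longrightarrow> prop_sat (A \<inter> B) \<psi> = prop_sat A \<psi>"
  by (induction \<psi>) auto

lemma prop_sat_atom_imp_mem: "\<chi> \<in> atoms \<psi> \<Longrightarrow> prop_sat A \<chi> \<Longrightarrow> \<chi> \<in> A"
  by (induction \<psi>) auto

lemma prop_assignmentD:
  assumes "prop_assignment \<phi> A'"
  shows "FF \<notin> A'" and "Neg a \<in> A' \<Longrightarrow> Pos a \<notin> A'"
    and "And g h \<in> A' \<Longrightarrow> g \<in> A' \<and> h \<in> A'"
    and "Or g h \<in> A' \<Longrightarrow> g \<in> A' \<or> h \<in> A'"
  using assms unfolding prop_assignment_def by blast+

lemma prop_assignment_imp_prop_sat: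
  assumes "prop_assignment \<phi> A'"
  shows "\<psi> \<in> A' \<Longrightarrow> prop_sat A' \<psi>"
proof (induction \<psi>)
  case FF
  then show ?case using prop_assignmentD(1)[OF assms] by simp
next
  case (Neg a)
  then show ?case using prop_assignmentD(2)[OF assms] by simp
next
  case (And g h)
  with prop_assignmentD(3)[OF assms And.prems] show ?case by simp
next
  case (Or g h)
  with prop_assignmentD(4)[OF assms Or.prems] show ?case by auto
qed simp_all

definition cl_sat :: "'a ltl \<Rightarrow> 'a ltl set \<Rightarrow> 'a ltl set" where
  "cl_sat \<phi> A = {\<psi> \<in> cl \<phi> \<union> lits. prop_sat A \<psi>}"

lemma prop_assignment_cl_sat:
  assumes "\<And>g h. Until g h \<notin> A" and "\<And>g h. Release g h \<notin> A"
  shows "prop_assignment \<phi> (cl_sat \<phi> A)"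
  unfolding prop_assignment_def
proof (intro conjI allI impI)
  show "cl_sat \<phi> A \<subseteq> cl \<phi> \<union> lits" by (auto simp: cl_sat_def)
  show "FF \<notin> cl_sat \<phi> A" by (simp add: cl_sat_def)
  show "(Pos a \<in> cl_sat \<phi> A) \<noteq> (Neg a \<in> cl_sat \<phi> A)" for a
    by (simp add: cl_sat_def lits_def)
next
  fix g h assume "And g h \<in> cl_sat \<phi> A"
  then show "g \<in> cl_sat \<phi> A" "h \<in> cl_sat \<phi> A"
    by (auto simp: cl_sat_def lits_def intro: cl.and1 cl.and2)
next
  fix g h assume "Or g h \<in> cl_sat \<phi> A"
  then show "g \<in> cl_sat \<phi> A \<or> h \<in> cl_sat \<phi> A"
    by (auto simp: cl_sat_def lits_def intro: cl.or1 cl.or2)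
next
  fix g h assume "Until g h \<in> cl_sat \<phi> A"
  with assms(1) show "h \<in> cl_sat \<phi> A \<or> g \<in> cl_sat \<phi> A \<and> Next (Until g h) \<in> cl_sat \<phi> A"
    by (simp add: cl_sat_def)
next
  fix g h assume "Release g h \<in> cl_sat \<phi> A"
  with assms(2) show "h \<in> cl_sat \<phi> A" "g \<in> cl_sat \<phi> A \<or> Next (Release g h) \<in> cl_sat \<phi> A"
    by (simp_all add: cl_sat_def)
qed

lemma cl_sat_Int_atoms: "cl_sat \<phi> A \<inter> atoms \<psi> \<subseteq> A"
  by (auto simp: cl_sat_def intro: prop_sat_atom_imp_mem)

theorem theorem4:
  fixes \<phi> :: "('a::finite) ltl"
  assumes "xnf \<phi>"
  shows "(\<forall>A. sat_assignment \<phi> A \<longrightarrow>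
            (\<exists>A'. prop_assignment \<phi> A' \<and> \<phi> \<in> A' \<and> A' \<inter> atoms \<phi> \<subseteq> A))
       \<and> (\<forall>A'. prop_assignment \<phi> A' \<and> \<phi> \<in> A' \<longrightarrow>
            (\<exists>A. sat_assignment \<phi> A \<and> A' \<inter> atoms \<phi> \<subseteq> A))"
proof (intro conjI allI impI)
  fix A assume "sat_assignment \<phi> A"
  then have "A \<subseteq> atoms \<phi>" and "prop_sat A \<phi>"
    by (simp_all add: sat_assignment_def)
  with assms have "prop_assignment \<phi> (cl_sat \<phi> A)"
    by (intro prop_assignment_cl_sat) (auto simp: xnf_def is_until_or_release_def)
  moreover have "\<phi> \<in> cl_sat \<phi> A"
    using \<open>prop_sat A \<phi>\<close> by (simp add: cl_sat_def cl.self)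
  ultimately show "\<exists>A'. prop_assignment \<phi> A' \<and> \<phi> \<in> A' \<and> A' \<inter> atoms \<phi> \<subseteq> A"
    using cl_sat_Int_atoms by blast
next
  fix A' assume "prop_assignment \<phi> A' \<and> \<phi> \<in> A'"
  then have "prop_sat A' \<phi>"
    using prop_assignment_imp_prop_sat by blast
  then have "prop_sat (A' \<inter> atoms \<phi>) \<phi>"
    by (simp add: prop_sat_Int_atoms)
  then have "sat_assignment \<phi> (A' \<inter> atoms \<phi>)"
    by (simp add: sat_assignment_def)
  then show "\<exists>A. sat_assignment \<phi> A \<and> A' \<inter> atoms \<phi> \<subseteq> A" by blast
qed

end
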